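(* Let $n,m>3$ be integers and let $\psi$ be an automorphism of $\mathcal{CSR}(m,n)$. Then there is a permutation $\sigma$ of $[m]$ such that for all distinct $a,b\in[m]$, $\psi$ maps the parts of $\mathcal{P}_{ab}$ onto the parts of $\mathcal{P}_{\sigma(a)\sigma(b)}$, i.e. $\psi(\mathcal{P}_{ab})=\mathcal{P}_{\sigma(a)\sigma(b)}$.
   Context: For positive integers $m,n$, the cyclic simplicial rook graph $\mathcal{CSR}(m,n)$ is the graph whose vertices are the vectors $(a_1,\dots,a_m)\in\mathbb{Z}_n^m$ with $a_1+\cdots+a_m\equiv 0 \pmod n$, two vertices being adjacent if and only if their vectors differ in exactly two coordinates. $[m]=\{1,\dots,m\}$; $e_i\in\mathbb{Z}_n^m$ is the vector with $1$ in coordinate $i$ and $0$ elsewhere; for distinct $a,b\in[m]$, $S_{ab}=\{\alpha(e_a-e_b)\mid \alpha\in\mathbb{Z}_n\}$ (note $S_{ab}=S_{ba}$), $x+A=\{x+y\mid y\in A\}$, and $\mathcal{P}_{ab}=\{\xi+S_{ab}\mid \xi \text{ a vertex of } \mathcal{CSR}(m,n)\}$, which is a partition of the vertex set. $\psi(\mathcal{P}_{ab})$ denotes $\{\psi(P)\mid P\in\mathcal{P}_{ab}\}$. *)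

theory Defs
  imports Main
begin

text \<open>Vectors in Z_n^m are modelled as functions nat => nat, with coordinates
  indexed by [m] = {1..m}, entries in {0..<n}, and value 0 outside [m].\<close>

definition zvecs :: "nat \<Rightarrow> nat \<Rightarrow> (nat \<Rightarrow> nat) set" where
  "zvecs m n = {x. (\<forall>i\<in>{1..m}. x i < n) \<and> (\<forall>i. i \<notin> {1..m} \<longrightarrow> x i = 0)}"

definition csr_vertices :: "nat \<Rightarrow> nat \<Rightarrow> (nat \<Rightarrow> nat) set" where
  "csr_vertices m n = {x \<in> zvecs m n. (\<Sum>i\<in>{1..m}. x i) mod n = 0}"

definition csr_adj :: "nat \<Rightarrow> (nat \<Rightarrow> nat) \<Rightarrow> (nat \<Rightarrow> nat) \<Rightarrow> bool" where
  "csr_adj m x y \<longleftrightarrow> card {i \<in> {1..m}. x i \<noteq> y i} = 2"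

definition csr_aut :: "nat \<Rightarrow> nat \<Rightarrow> ((nat \<Rightarrow> nat) \<Rightarrow> (nat \<Rightarrow> nat)) \<Rightarrow> bool" where
  "csr_aut m n \<psi> \<longleftrightarrow> bij_betw \<psi> (csr_vertices m n) (csr_vertices m n) \<and>
     (\<forall>x\<in>csr_vertices m n. \<forall>y\<in>csr_vertices m n. csr_adj m x y \<longleftrightarrow> csr_adj m (\<psi> x) (\<psi> y))"

definition zadd :: "nat \<Rightarrow> (nat \<Rightarrow> nat) \<Rightarrow> (nat \<Rightarrow> nat) \<Rightarrow> (nat \<Rightarrow> nat)" where
  "zadd n x y = (\<lambda>i. (x i + y i) mod n)"

definition zneg :: "nat \<Rightarrow> (nat \<Rightarrow> nat) \<Rightarrow> (nat \<Rightarrow> nat)" where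
  "zneg n x = (\<lambda>i. (n - x i mod n) mod n)"

definition zsmul :: "nat \<Rightarrow> nat \<Rightarrow> (nat \<Rightarrow> nat) \<Rightarrow> (nat \<Rightarrow> nat)" where
  "zsmul n \<alpha> x = (\<lambda>i. (\<alpha> * x i) mod n)"

definition unitvec :: "nat \<Rightarrow> (nat \<Rightarrow> nat)" where
  "unitvec a = (\<lambda>i. if i = a then 1 else 0)"

definition S_set :: "nat \<Rightarrow> nat \<Rightarrow> nat \<Rightarrow> (nat \<Rightarrow> nat) set" where
  "S_set n a b = {zsmul n \<alpha> (zadd n (unitvec a) (zneg n (unitvec b))) | \<alpha>. \<alpha> < n}"

definition coset :: "nat \<Rightarrow> (nat \<Rightarrow> nat) \<Rightarrow> (nat \<Rightarrow> nat) set \<Rightarrow> (nat \<Rightarrow> nat) set" where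
  "coset n x A = {zadd n x y | y. y \<in> A}"

definition P_part :: "nat \<Rightarrow> nat \<Rightarrow> nat \<Rightarrow> nat \<Rightarrow> (nat \<Rightarrow> nat) set set" where
  "P_part m n a b = {coset n \<xi> (S_set n a b) | \<xi>. \<xi> \<in> csr_vertices m n}"

end

theory Submission
  imports Defs "HOL-Number_Theory.Cong"
begin

lemma card_2_sets_cover_cases:
  assumes A: "card A = 2" and B: "card B = 2" and C: "card C = 2"
    and cover: "A \<subseteq> B \<union> C" "B \<subseteq> A \<union> C" "C \<subseteq> A \<union> B"
  shows "(B = A \<and> C = A) \<or>
    (\<exists>p q r. A = {p, q} \<and> B = {p, r} \<and> C = {q, r} \<and> p \<noteq> q \<and> p \<noteq> r \<and> q \<noteq> r)"
proof (cases "B = A")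
  case True
  then have "C \<subseteq> A" using cover(3) by simp
  then have "C = A" using A C by (metis card_subset_eq card.infinite zero_neq_numeral)
  then show ?thesis using True by blast
next
  case False
  have "A \<inter> B \<noteq> {}"
  proof
    assume "A \<inter> B = {}"
    then have "card (A \<union> B) = 4" using A B by (simp add: card_Un_disjoint card_ge_0_finite)
    moreover have "A \<union> B \<subseteq> C" using cover(1,2) \<open>A \<inter> B = {}\<close> by blast
    ultimately show False using C card_mono[of C "A \<union> B"] by (simp add: card_ge_0_finite)
  qed
  then obtain p where p: "p \<in> A" "p \<in> B" by blast
  obtain q where Aq: "A = {p, q}" "p \<noteq> q" using A p(1) by (metis card_2_iff doubleton_eq_iff insertE singletonD)
  obtain r where Br: "B = {p, r}" "p \<noteq> r" using B p(2) by (metis card_2_iff doubleton_eq_iff insertE singletonD)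
  have "q \<noteq> r" using False Aq Br by blast
  then have "{q, r} \<subseteq> C" using cover(1,2) Aq Br by blast
  then have "C = {q, r}" using C \<open>q \<noteq> r\<close> by (metis card_2_iff card_ge_0_finite card_subset_eq zero_less_numeral)
  then show ?thesis using Aq Br \<open>q \<noteq> r\<close> by blast
qed

lemma pair_neq_obtain:
  assumes "{p1, p2} \<noteq> {q1, q2}" "p1 \<noteq> p2" "q1 \<noteq> q2"
  obtains q q' where "{q1, q2} = {q, q'}" "q \<noteq> q'" "q \<notin> {p1, p2}"
proof (cases "q1 \<in> {p1, p2}")
  case True
  have "q2 \<notin> {p1, p2}"
  proof
    assume "q2 \<in> {p1, p2}"
    then have "{q1, q2} \<subseteq> {p1, p2}" using True by blast
    then have "{q1, q2} = {p1, p2}" using assms(2,3) by (simp add: card_subset_eq)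
    then show False using assms(1) by simp
  qed
  moreover have "{q1, q2} = {q2, q1}" by blast
  ultimately show thesis using that[of q2 q1] assms(3) by simp
next
  case False
  then show thesis using that[of q1 q2] assms(3) by simp
qed

lemma sum_split_pair:
  fixes f :: "nat \<Rightarrow> nat"
  assumes "finite I" "a \<in> I" "b \<in> I" "a \<noteq> b"
  shows "sum f I = f a + f b + sum f (I - {a, b})"
proof -
  have "sum f I = f a + sum f (I - {a})" using assms by (simp add: sum.remove)
  also have "sum f (I - {a}) = f b + sum f (I - {a} - {b})" using assms by (simp add: sum.remove)
  also have "I - {a} - {b} = I - {a, b}" by auto
  finally show ?thesis by (simp add: add.assoc)
qed

lemma pair_map_induced_by_permutation:
  fixes f :: "'a \<Rightarrow> 'a \<Rightarrow> 'a set" and A :: "'a set"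
  assumes fin: "finite A" and four: "4 \<le> card A"
    and sym: "\<And>i j. f i j = f j i"
    and pair: "\<And>i j. i \<in> A \<Longrightarrow> j \<in> A \<Longrightarrow> i \<noteq> j \<Longrightarrow>
      \<exists>p q. p \<in> A \<and> q \<in> A \<and> p \<noteq> q \<and> f i j = {p, q}"
    and inj: "\<And>i j k l. i \<in> A \<Longrightarrow> j \<in> A \<Longrightarrow> k \<in> A \<Longrightarrow> l \<in> A \<Longrightarrow>
      i \<noteq> j \<Longrightarrow> k \<noteq> l \<Longrightarrow> f i j = f k l \<Longrightarrow> {i, j} = {k, l}"
    and tri: "\<And>i j k. i \<in> A \<Longrightarrow> j \<in> A \<Longrightarrow> k \<in> A \<Longrightarrow> i \<noteq> j \<Longrightarrow> i \<noteq> k \<Longrightarrow> j \<noteq> k \<Longrightarrow>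
      \<exists>p q r. f i j = {p, q} \<and> f i k = {p, r} \<and> f j k = {q, r} \<and> p \<noteq> q \<and> p \<noteq> r \<and> q \<noteq> r"
  shows "\<exists>\<sigma>. bij_betw \<sigma> A A \<and> (\<forall>i\<in>A. \<forall>j\<in>A. i \<noteq> j \<longrightarrow> f i j = {\<sigma> i, \<sigma> j})"
proof -
  have avoid: "\<exists>d\<in>A. d \<notin> {a, b, c}" for a b c
  proof -
    have "card {a, b, c} \<le> 3" by (simp add: card_insert_le_m1)
    then have "card {a, b, c} < card A" using four by linarith
    then show ?thesis by (metis card_mono finite.emptyI finite.insertI not_le subsetI)
  qed
  have meet: "f i j \<inter> f i k \<noteq> {}"
    if "i \<in> A" "j \<in> A" "k \<in> A" "i \<noteq> j" "i \<noteq> k" "j \<noteq> k" for i j k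
    using tri[OF that] by (elim exE) auto
  text \<open>Injectivity forces the three labels of a vertex i to share a common element.\<close>
  have common: "\<exists>e. \<forall>j\<in>A. j \<noteq> i \<longrightarrow> e \<in> f i j" if i: "i \<in> A" for i
  proof -
    obtain j where j: "j \<in> A" "j \<noteq> i" using avoid[of i i i] by auto
    obtain k where k: "k \<in> A" "k \<noteq> i" "k \<noteq> j" using avoid[of i j j] by auto
    obtain p q r where pqr: "f i j = {p, q}" "f i k = {p, r}" "f j k = {q, r}" "p \<noteq> q" "p \<noteq> r" "q \<noteq> r"
      using tri[OF i j(1) k(1)] j k by metis
    have "p \<in> f i l" if l: "l \<in> A" "l \<noteq> i" for l
    proof (rule ccontr)
      assume np: "p \<notin> f i l"
      then have lj: "l \<noteq> j" "l \<noteq> k" using pqr by auto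
      have "f i j \<inter> f i l \<noteq> {}" "f i k \<inter> f i l \<noteq> {}"
        using meet[OF i j(1) l(1)] meet[OF i k(1) l(1)] j k l lj by auto
      then have "q \<in> f i l" "r \<in> f i l" using np pqr by auto
      moreover obtain s t where "s \<noteq> t" "f i l = {s, t}" using pair[OF i l(1)] l by blast
      ultimately have "f i l = f j k" using pqr by auto
      then have "{i, l} = {j, k}" using inj[OF i l(1) j(1) k(1)] l k by auto
      then show False using j k by auto
    qed
    then show ?thesis by blast
  qed
  define \<sigma> where "\<sigma> i = (SOME e. \<forall>j\<in>A. j \<noteq> i \<longrightarrow> e \<in> f i j)" for i
  have \<sigma>_label: "\<sigma> i \<in> f i j" if "i \<in> A" "j \<in> A" "j \<noteq> i" for i j
    using someI_ex[OF common[OF that(1)]] that by (auto simp: \<sigma>_def)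
  have \<sigma>_in: "\<sigma> i \<in> A" if i: "i \<in> A" for i
  proof -
    obtain j where j: "j \<in> A" "j \<noteq> i" using avoid[of i i i] by auto
    then show ?thesis using pair[OF i j(1)] \<sigma>_label[OF i j] by auto
  qed
  have \<sigma>_inj: "\<sigma> i \<noteq> \<sigma> j" if ij: "i \<in> A" "j \<in> A" "i \<noteq> j" for i j
  proof
    assume e: "\<sigma> i = \<sigma> j"
    obtain k where k: "k \<in> A" "k \<noteq> i" "k \<noteq> j" using avoid[of i j j] by auto
    have "\<sigma> i \<in> f i j \<inter> f i k \<inter> f j k" using \<sigma>_label[of i j] \<sigma>_label[of i k] \<sigma>_label[of j k] ij k e by simp
    moreover have "f i j \<inter> f i k \<inter> f j k = {}" using tri[OF ij(1,2) k(1)] ij k by fastforce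
    ultimately show False by blast
  qed
  have labels: "f i j = {\<sigma> i, \<sigma> j}" if ij: "i \<in> A" "j \<in> A" "i \<noteq> j" for i j
  proof -
    have "{\<sigma> i, \<sigma> j} \<subseteq> f i j" using \<sigma>_label[OF ij(1,2)] \<sigma>_label[OF ij(2,1)] sym[of i j] ij by auto
    then show ?thesis using pair[OF ij] \<sigma>_inj[OF ij] by (metis card_2_iff card_subset_eq finite.emptyI finite.insertI)
  qed
  have "inj_on \<sigma> A" using \<sigma>_inj by (meson inj_onI)
  moreover have "\<sigma> ` A = A"
    using \<open>inj_on \<sigma> A\<close> \<sigma>_in fin by (simp add: card_image card_subset_eq image_subsetI)
  ultimately show ?thesis using labels by (auto simp: bij_betw_def)
qed

locale csr_graph =
  fixes m n :: nat
  assumes three_le_n: "3 \<le> n" and four_le_m: "4 \<le> m"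
begin

abbreviation V where "V \<equiv> csr_vertices m n"
abbreviation adj where "adj \<equiv> csr_adj m"

definition diffs :: "(nat \<Rightarrow> nat) \<Rightarrow> (nat \<Rightarrow> nat) \<Rightarrow> nat set" where
  "diffs x y = {i \<in> {1..m}. x i \<noteq> y i}"

lemma adj_iff_card_diffs: "adj x y \<longleftrightarrow> card (diffs x y) = 2"
  by (simp add: csr_adj_def diffs_def)

lemma in_diffs_iff: "i \<in> diffs x y \<longleftrightarrow> i \<in> {1..m} \<and> x i \<noteq> y i"
  by (simp add: diffs_def)

lemma eq_if_notin_diffs: "i \<in> {1..m} \<Longrightarrow> i \<notin> diffs x y \<Longrightarrow> x i = y i"
  by (simp add: diffs_def)

lemma diffs_self [simp]: "diffs x x = {}"
  by (simp add: diffs_def)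

lemma diffs_commute: "diffs x y = diffs y x"
  by (auto simp: diffs_def)

lemma adj_commute: "adj x y \<longleftrightarrow> adj y x"
  by (simp add: adj_iff_card_diffs diffs_commute)

lemma diffs_subset_Un: "diffs x y \<subseteq> diffs x z \<union> diffs z y"
  by (auto simp: diffs_def)

lemma diffs_subsetI: "(\<And>i. i \<in> {1..m} \<Longrightarrow> i \<notin> P \<Longrightarrow> x i = y i) \<Longrightarrow> diffs x y \<subseteq> P"
  by (auto simp: diffs_def)

lemma diffs_subset_atLeastAtMost: "diffs x y \<subseteq> {1..m}"
  by (auto simp: diffs_def)

lemma mem_V_iff:
  "x \<in> V \<longleftrightarrow> (\<forall>i\<in>{1..m}. x i < n) \<and> (\<forall>i. i \<notin> {1..m} \<longrightarrow> x i = 0) \<and>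
     (\<Sum>i\<in>{1..m}. x i) mod n = 0"
  by (simp add: csr_vertices_def zvecs_def)

lemma V_lt: "x \<in> V \<Longrightarrow> i \<in> {1..m} \<Longrightarrow> x i < n"
  by (simp add: mem_V_iff)

lemma V_zero: "x \<in> V \<Longrightarrow> i \<notin> {1..m} \<Longrightarrow> x i = 0"
  by (simp add: mem_V_iff)

lemma V_eqI:
  assumes "x \<in> V" "y \<in> V" "diffs x y = {}"
  shows "x = y"
proof
  fix i
  show "x i = y i"
    using assms by (cases "i \<in> {1..m}") (auto simp: mem_V_iff diffs_def)
qed

lemma cong_pair_sum_if_diffs_subset:
  assumes x: "x \<in> V" and y: "y \<in> V" and ab: "a \<in> {1..m}" "b \<in> {1..m}" "a \<noteq> b"
    and d: "diffs x y \<subseteq> {a, b}"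
  shows "[x a + x b = y a + y b] (mod n)"
proof -
  let ?R = "\<lambda>z. \<Sum>i\<in>{1..m} - {a, b}. z i"
  have "?R x = ?R y"
    using d by (intro sum.cong) (auto simp: diffs_def)
  moreover have "[x a + x b + ?R x = y a + y b + ?R y] (mod n)"
    using x y sum_split_pair[OF _ ab, of x] sum_split_pair[OF _ ab, of y]
    by (simp add: mem_V_iff cong_def)
  ultimately show ?thesis using cong_add_rcancel_nat by metis
qed

lemma V_eq_if_diffs_subset:
  assumes x: "x \<in> V" and y: "y \<in> V" and ab: "a \<in> {1..m}" "b \<in> {1..m}" "a \<noteq> b"
    and d: "diffs x y \<subseteq> {a, b}" and a: "x a = y a"
  shows "x = y"
proof -
  have "[x b = y b] (mod n)"
    using cong_pair_sum_if_diffs_subset[OF x y ab d] a cong_add_lcancel_nat by metis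
  then have "x b = y b" using x y ab by (simp add: mem_V_iff cong_def)
  then have "diffs x y = {}" using d a by (auto simp: diffs_def)
  then show ?thesis using V_eqI x y by blast
qed

lemma diffs_eq_pair:
  assumes x: "x \<in> V" and y: "y \<in> V" and ab: "a \<in> {1..m}" "b \<in> {1..m}" "a \<noteq> b"
    and d: "diffs x y \<subseteq> {a, b}" and "x \<noteq> y"
  shows "diffs x y = {a, b}"
proof -
  have "a \<in> diffs x y" using V_eq_if_diffs_subset[OF x y ab d] \<open>x \<noteq> y\<close> ab by (auto simp: diffs_def)
  moreover have "b \<in> diffs x y"
    using V_eq_if_diffs_subset[OF x y ab(2,1) _] \<open>x \<noteq> y\<close> ab d by (auto simp: diffs_def insert_commute)
  ultimately show ?thesis using d by auto
qed

lemma ex_vertex_diffs_subset: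
  assumes x: "x \<in> V" and ac: "a \<in> {1..m}" "c \<in> {1..m}" "a \<noteq> c" and \<beta>: "\<beta> < n"
  shows "\<exists>y\<in>V. diffs x y \<subseteq> {a, c} \<and> y c = \<beta>"
proof -
  define y where "y = x(c := \<beta>, a := (x a + x c + (n - \<beta>)) mod n)"
  have "(\<Sum>i\<in>{1..m}. y i) = y a + y c + (\<Sum>i\<in>{1..m} - {a, c}. x i)"
    using sum_split_pair[OF _ ac, of y] by (simp add: y_def)
  also have "[\<dots> = x a + x c + (n - \<beta>) + \<beta> + (\<Sum>i\<in>{1..m} - {a, c}. x i)] (mod n)"
    using ac by (simp add: y_def cong_def) (metis mod_add_left_eq)
  also have "x a + x c + (n - \<beta>) + \<beta> + (\<Sum>i\<in>{1..m} - {a, c}. x i) = (\<Sum>i\<in>{1..m}. x i) + n"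
    using sum_split_pair[OF _ ac, of x] \<beta> by simp
  finally have "(\<Sum>i\<in>{1..m}. y i) mod n = 0"
    using x by (simp add: mem_V_iff cong_def)
  then have "y \<in> V" using x \<beta> ac three_le_n by (auto simp: mem_V_iff y_def)
  moreover have "diffs x y \<subseteq> {a, c}" by (auto simp: diffs_def y_def)
  ultimately show ?thesis using ac by (auto simp: y_def)
qed

lemma ex_neighbour:
  assumes x: "x \<in> V" and ac: "a \<in> {1..m}" "c \<in> {1..m}" "a \<noteq> c" and \<beta>: "\<beta> < n" "\<beta> \<noteq> x c"
  shows "\<exists>y\<in>V. diffs x y = {a, c} \<and> y c = \<beta>"
proof -
  obtain y where y: "y \<in> V" "diffs x y \<subseteq> {a, c}" "y c = \<beta>"
    using ex_vertex_diffs_subset[OF x ac \<beta>(1)] by blast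
  then have "x \<noteq> y" using \<beta>(2) by auto
  then show ?thesis using y diffs_eq_pair[OF x y(1) ac y(2)] by blast
qed

lemma not_adj_if_three_diffs:
  assumes "i \<in> diffs x y" "j \<in> diffs x y" "k \<in> diffs x y" "i \<noteq> j" "i \<noteq> k" "j \<noteq> k"
  shows "\<not> adj x y"
proof -
  have "card {i, j, k} \<le> card (diffs x y)"
    using assms by (intro card_mono) (auto simp: diffs_def)
  then show ?thesis using assms by (simp add: adj_iff_card_diffs)
qed

lemma diffs_eq_if_adj:
  assumes "adj x y" "i \<in> diffs x y" "j \<in> diffs x y" "i \<noteq> j"
  shows "diffs x y = {i, j}"
proof -
  have "finite (diffs x y)" by (simp add: diffs_def)
  then show ?thesis using card_subset_eq[of "diffs x y" "{i, j}"] assms by (simp add: adj_iff_card_diffs)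
qed

lemma adj_if_diffs_eq: "diffs x y = {i, j} \<Longrightarrow> i \<noteq> j \<Longrightarrow> adj x y"
  by (simp add: adj_iff_card_diffs)

lemma diffs_eq_if_common_pivot:
  assumes "diffs x u = {a, b}" "diffs x v = {a, c}" "u a = v a" "a \<noteq> b" "a \<noteq> c" "b \<noteq> c"
  shows "diffs u v = {b, c}"
proof -
  have u: "x i \<noteq> u i \<longleftrightarrow> i = a \<or> i = b" and v: "x i \<noteq> v i \<longleftrightarrow> i = a \<or> i = c"
    if "i \<in> {1..m}" for i
    using that assms(1,2) by (auto simp: diffs_def set_eq_iff)
  have "{a, b, c} \<subseteq> {1..m}" using assms(1,2) diffs_subset_atLeastAtMost by blast
  show ?thesis
  proof (rule set_eqI)
    fix i
    show "i \<in> diffs u v \<longleftrightarrow> i \<in> {b, c}"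
    proof (cases "i \<in> {1..m}")
      case True
      have "u i \<noteq> v i \<longleftrightarrow> i = b \<or> i = c"
      proof (cases "i = a")
        case False
        then have "x i \<noteq> u i \<longleftrightarrow> i = b" "x i \<noteq> v i \<longleftrightarrow> i = c" using u[OF True] v[OF True] by auto
        then show ?thesis using assms(6) by metis
      qed (use assms(3-5) in auto)
      then show ?thesis using True by (simp add: diffs_def)
    qed (use \<open>{a, b, c} \<subseteq> {1..m}\<close> in \<open>auto simp: diffs_def\<close>)
  qed
qed

lemma diffs_eq_Un_if_disjoint:
  assumes "diffs x u \<inter> diffs x v = {}"
  shows "diffs u v = diffs x u \<union> diffs x v"
proof (rule set_eqI)
  fix i
  show "i \<in> diffs u v \<longleftrightarrow> i \<in> diffs x u \<union> diffs x v"
    using assms by (cases "x i = u i"; cases "x i = v i") (auto simp: in_diffs_iff disjoint_iff)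
qed

lemma adj_triangle_cases:
  assumes xy: "adj x y" and xz: "adj x z" and yz: "adj y z"
  shows "(diffs x z = diffs x y \<and> diffs y z = diffs x y) \<or>
    (\<exists>p q r. diffs x y = {p, q} \<and> diffs x z = {p, r} \<and> diffs y z = {q, r} \<and>
       p \<noteq> q \<and> p \<noteq> r \<and> q \<noteq> r)"
proof (rule card_2_sets_cover_cases)
  show "card (diffs x y) = 2" "card (diffs x z) = 2" "card (diffs y z) = 2"
    using assms by (simp_all add: adj_iff_card_diffs)
  show "diffs x y \<subseteq> diffs x z \<union> diffs y z"
    using diffs_subset_Un[of x y z] diffs_commute[of z y] by simp
  show "diffs x z \<subseteq> diffs x y \<union> diffs y z"
    using diffs_subset_Un[of x z y] by simp
  show "diffs y z \<subseteq> diffs x y \<union> diffs x z"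
    using diffs_subset_Un[of y z x] diffs_commute[of y x] by auto
qed

definition line :: "(nat \<Rightarrow> nat) \<Rightarrow> nat set \<Rightarrow> (nat \<Rightarrow> nat) set" where
  "line x P = {y \<in> V. diffs x y \<subseteq> P}"

lemma line_self: "x \<in> V \<Longrightarrow> x \<in> line x P"
  by (simp add: line_def diffs_def)

lemma diffs_subset_if_mem_line: "y \<in> line x P \<Longrightarrow> z \<in> line x P \<Longrightarrow> diffs y z \<subseteq> P"
  using diffs_subset_Un[of y z x] diffs_commute[of y x] by (auto simp: line_def)

lemma line_eq_if_mem:
  assumes "y \<in> line x P"
  shows "line y P = line x P"
proof -
  have "z \<in> line y P \<longleftrightarrow> z \<in> line x P" for z
    using assms diffs_subset_Un[of x z y] diffs_subset_Un[of y z x] diffs_commute[of y x]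
    by (auto simp: line_def)
  then show ?thesis by blast
qed

lemma line_point_eqI:
  assumes "y \<in> line x {a, b}" "z \<in> line x {a, b}" "a \<in> {1..m}" "b \<in> {1..m}" "a \<noteq> b" "y a = z a"
  shows "y = z"
proof -
  have "y \<in> V" "z \<in> V" using assms(1,2) by (simp_all add: line_def)
  then show ?thesis using V_eq_if_diffs_subset diffs_subset_if_mem_line[OF assms(1,2)] assms(3-6) by blast
qed

lemma diffs_eq_if_mem_line:
  assumes "y \<in> line x {a, b}" "z \<in> line x {a, b}" "a \<in> {1..m}" "b \<in> {1..m}" "a \<noteq> b" "y \<noteq> z"
  shows "diffs y z = {a, b}"
proof -
  have "y \<in> V" "z \<in> V" using assms(1,2) by (simp_all add: line_def)
  then show ?thesis using diffs_eq_pair diffs_subset_if_mem_line[OF assms(1,2)] assms(3-6) by blast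
qed

definition clique :: "(nat \<Rightarrow> nat) set \<Rightarrow> bool" where
  "clique K \<longleftrightarrow> K \<subseteq> V \<and> (\<forall>x\<in>K. \<forall>y\<in>K. x \<noteq> y \<longrightarrow> adj x y)"

text \<open>Lines and stars are exactly the closed cliques (closed_clique_cases), and closedness
  is expressed by adjacency alone, so automorphisms permute closed cliques.\<close>
definition closed_clique :: "(nat \<Rightarrow> nat) set \<Rightarrow> bool" where
  "closed_clique C \<longleftrightarrow> clique C \<and> (\<exists>u\<in>C. \<exists>v\<in>C. \<exists>w\<in>C. u \<noteq> v \<and> u \<noteq> w \<and> v \<noteq> w) \<and>
     (\<forall>w\<in>V. \<forall>u\<in>C. \<forall>v\<in>C. \<forall>t\<in>C. u \<noteq> v \<and> u \<noteq> t \<and> v \<noteq> t \<and> adj w u \<and> adj w v \<and> adj w t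
        \<longrightarrow> w \<in> C)"

lemma closed_clique_subset: "closed_clique C \<Longrightarrow> C \<subseteq> V"
  by (simp add: closed_clique_def clique_def)

lemma closed_clique_adj: "closed_clique C \<Longrightarrow> x \<in> C \<Longrightarrow> y \<in> C \<Longrightarrow> x \<noteq> y \<Longrightarrow> adj x y"
  by (simp add: closed_clique_def clique_def)

lemma closed_cliqueD:
  "closed_clique C \<Longrightarrow> w \<in> V \<Longrightarrow> u \<in> C \<Longrightarrow> v \<in> C \<Longrightarrow> t \<in> C \<Longrightarrow> u \<noteq> v \<Longrightarrow> u \<noteq> t \<Longrightarrow> v \<noteq> t \<Longrightarrow>
    adj w u \<Longrightarrow> adj w v \<Longrightarrow> adj w t \<Longrightarrow> w \<in> C"
  unfolding closed_clique_def by blast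

lemma closed_clique_three:
  assumes "closed_clique C"
  obtains u v w where "u \<in> C" "v \<in> C" "w \<in> C" "u \<noteq> v" "u \<noteq> w" "v \<noteq> w"
  using assms unfolding closed_clique_def by blast

lemma closed_clique_eq_if_subset:
  assumes K: "clique K" and C: "closed_clique C" and "C \<subseteq> K"
  shows "C = K"
proof (rule ccontr)
  assume "C \<noteq> K"
  then obtain k where k: "k \<in> K" "k \<notin> C" using \<open>C \<subseteq> K\<close> by blast
  obtain u v w where uvw: "u \<in> C" "v \<in> C" "w \<in> C" "u \<noteq> v" "u \<noteq> w" "v \<noteq> w"
    using C by (rule closed_clique_three)
  have "adj k u" "adj k v" "adj k w"
    using K k uvw \<open>C \<subseteq> K\<close> unfolding clique_def by (metis subsetD)+
  moreover have "k \<in> V" using K k by (auto simp: clique_def)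
  ultimately show False using closed_cliqueD[OF C _ uvw] k by blast
qed

lemma line_clique:
  assumes "a \<in> {1..m}" "b \<in> {1..m}" "a \<noteq> b"
  shows "clique (line x {a, b})"
  unfolding clique_def
proof (intro conjI ballI impI)
  show "line x {a, b} \<subseteq> V" by (auto simp: line_def)
  show "adj y z" if "y \<in> line x {a, b}" "z \<in> line x {a, b}" "y \<noteq> z" for y z
    using adj_if_diffs_eq[OF diffs_eq_if_mem_line[OF that(1,2) assms that(3)] assms(3)] .
qed

lemma three_line_points_not_pinned:
  assumes pq: "p \<in> {1..m}" "q \<in> {1..m}" "p \<noteq> q"
    and w: "w1 \<in> line y {p, q}" "w2 \<in> line y {p, q}" "w3 \<in> line y {p, q}"
      "w1 \<noteq> w2" "w1 \<noteq> w3" "w2 \<noteq> w3"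
    and pinned: "\<forall>w\<in>{w1, w2, w3}. w p = c \<or> w q = d"
  shows False
proof -
  have eq_p: "w = w'" if "w \<in> line y {p, q}" "w' \<in> line y {p, q}" "w p = w' p" for w w'
    using line_point_eqI[OF that(1,2) pq that(3)] .
  have eq_q: "w = w'" if "w \<in> line y {p, q}" "w' \<in> line y {p, q}" "w q = w' q" for w w'
    using line_point_eqI[of w y q p w'] that pq by (metis insert_commute)
  show False
  proof (cases "w1 p = c")
    case True
    then have "w2 q = d" "w3 q = d" using eq_p[OF w(1,2)] eq_p[OF w(1,3)] pinned w(4,5) by auto
    then show False using eq_q[OF w(2,3)] w(6) by simp
  next
    case False
    then have "w1 q = d" using pinned by simp
    then have "w2 p = c" "w3 p = c" using eq_q[OF w(1,2)] eq_q[OF w(1,3)] pinned w(4,5) by auto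
    then show False using eq_p[OF w(2,3)] w(6) by simp
  qed
qed

lemma line_three_points:
  assumes x: "x \<in> V" and ab: "a \<in> {1..m}" "b \<in> {1..m}" "a \<noteq> b"
  obtains u v w where "u \<in> line x {a, b}" "v \<in> line x {a, b}" "w \<in> line x {a, b}"
    "u \<noteq> v" "u \<noteq> w" "v \<noteq> w"
proof -
  have pt: "\<exists>y\<in>line x {a, b}. y b = \<beta>" if "\<beta> < n" for \<beta>
    using ex_vertex_diffs_subset[OF x ab that] unfolding line_def by blast
  have "0 < n" "1 < n" "2 < n" using three_le_n by auto
  then obtain u v w where u: "u \<in> line x {a, b}" "u b = 0" and v: "v \<in> line x {a, b}" "v b = 1"
    and w: "w \<in> line x {a, b}" "w b = 2"
    by (meson pt)
  have "u \<noteq> v" "u \<noteq> w" "v \<noteq> w" using u(2) v(2) w(2) by auto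
  from that[OF u(1) v(1) w(1) this] show thesis .
qed

lemma line_closed_clique:
  assumes x: "x \<in> V" and ab: "a \<in> {1..m}" "b \<in> {1..m}" "a \<noteq> b"
  shows "closed_clique (line x {a, b})"
  unfolding closed_clique_def
proof (intro conjI ballI impI)
  show "clique (line x {a, b})" using line_clique[OF ab] .
  obtain u v w where "u \<in> line x {a, b}" "v \<in> line x {a, b}" "w \<in> line x {a, b}"
    "u \<noteq> v" "u \<noteq> w" "v \<noteq> w"
    using line_three_points[OF x ab] .
  then show "\<exists>u\<in>line x {a, b}. \<exists>v\<in>line x {a, b}. \<exists>w\<in>line x {a, b}. u \<noteq> v \<and> u \<noteq> w \<and> v \<noteq> w"
    by blast
  fix w u v t
  assume w: "w \<in> V" and uvt: "u \<in> line x {a, b}" "v \<in> line x {a, b}" "t \<in> line x {a, b}"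
    and adj: "u \<noteq> v \<and> u \<noteq> t \<and> v \<noteq> t \<and> adj w u \<and> adj w v \<and> adj w t"
  show "w \<in> line x {a, b}"
  proof (rule ccontr)
    assume "w \<notin> line x {a, b}"
    then obtain r where r: "r \<in> diffs x w" "r \<noteq> a" "r \<noteq> b" using w by (auto simp: line_def)
    have "y a = w a \<or> y b = w b" if y: "y \<in> line x {a, b}" "adj w y" for y
    proof (rule ccontr)
      assume "\<not> (y a = w a \<or> y b = w b)"
      then have "a \<in> diffs y w" "b \<in> diffs y w" using ab by (simp_all add: in_diffs_iff)
      moreover have "r \<in> diffs y w"
      proof -
        have "r \<notin> diffs x y" using y(1) r by (auto simp: line_def)
        then have "x r = y r" using r(1) by (simp add: in_diffs_iff)
        then show ?thesis using r(1) by (simp add: in_diffs_iff)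
      qed
      ultimately have "\<not> adj y w" using not_adj_if_three_diffs[of a y w b r] ab(3) r(2,3) by simp
      then show False using y(2) adj_commute by simp
    qed
    then have "\<forall>y\<in>{u, v, t}. y a = w a \<or> y b = w b" using uvt adj by simp
    then show False using three_line_points_not_pinned[OF ab uvt] adj by simp
  qed
qed

lemma ex_fresh_index: "\<exists>d\<in>{1..m}. d \<notin> {a, b, c}"
proof (rule ccontr)
  assume "\<not> ?thesis"
  then have "card {1..m} \<le> card {a, b, c}" by (intro card_mono) auto
  also have "\<dots> \<le> 3" by (simp add: card_insert_le_m1)
  finally show False using four_le_m by simp
qed

lemma eq_or_adj_if_mem_line:
  assumes "y \<in> line x {a, b}" "z \<in> line x {a, b}" "a \<in> {1..m}" "b \<in> {1..m}" "a \<noteq> b"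
  shows "y = z \<or> adj y z"
  using line_clique[OF assms(3-5)] assms(1,2) by (auto simp: clique_def)

lemma adj_diffsE:
  assumes "adj x y" "a \<in> diffs x y"
  obtains j where "j \<noteq> a" "diffs x y = {a, j}"
proof -
  obtain p q where pq: "diffs x y = {p, q}" "p \<noteq> q"
    using assms(1) by (auto simp: adj_iff_card_diffs card_2_iff)
  show thesis
  proof (cases "a = p")
    case True
    then show thesis using that[of q] pq by simp
  next
    case False
    then have "a = q" using assms(2) pq(1) by simp
    then show thesis using that[of p] pq by (simp add: insert_commute)
  qed
qed

definition star :: "(nat \<Rightarrow> nat) \<Rightarrow> nat \<Rightarrow> nat \<Rightarrow> (nat \<Rightarrow> nat) set" where
  "star x a \<alpha> = insert x {w \<in> V. adj x w \<and> w a = \<alpha>}"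

lemma star_pointE:
  assumes "s \<in> star x a \<alpha>" "s \<noteq> x" "a \<in> {1..m}" "\<alpha> \<noteq> x a"
  obtains j where "j \<noteq> a" "diffs x s = {a, j}" "s \<in> V" "s a = \<alpha>"
proof -
  have s: "adj x s" "s a = \<alpha>" "s \<in> V" using assms(1,2) by (auto simp: star_def)
  moreover have "a \<in> diffs x s" using assms(3,4) s(2) by (auto simp: in_diffs_iff)
  ultimately obtain j where "j \<noteq> a" "diffs x s = {a, j}" using adj_diffsE by blast
  from that[OF this s(3,2)] show thesis .
qed

lemma ex_star_point:
  assumes x: "x \<in> V" and aj: "a \<in> {1..m}" "j \<in> {1..m}" "a \<noteq> j" and \<alpha>: "\<alpha> < n" "\<alpha> \<noteq> x a"
  shows "\<exists>s\<in>V. s \<in> star x a \<alpha> \<and> diffs x s = {a, j} \<and> s a = \<alpha>"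
proof -
  obtain s where s: "s \<in> V" "diffs x s = {j, a}" "s a = \<alpha>"
    using ex_neighbour[OF x aj(2,1) aj(3)[symmetric] \<alpha>] by blast
  then have "adj x s" using aj(3) by (simp add: adj_if_diffs_eq)
  then show ?thesis using s by (auto simp: star_def insert_commute)
qed

lemma star_clique:
  assumes x: "x \<in> V" and a: "a \<in> {1..m}" and \<alpha>: "\<alpha> \<noteq> x a"
  shows "clique (star x a \<alpha>)"
  unfolding clique_def
proof (intro conjI ballI impI)
  show "star x a \<alpha> \<subseteq> V" using x by (auto simp: star_def)
  fix s s' assume s: "s \<in> star x a \<alpha>" and s': "s' \<in> star x a \<alpha>" and "s \<noteq> s'"
  consider "s = x" | "s' = x" | "s \<noteq> x" "s' \<noteq> x" by blast
  then show "adj s s'"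
  proof cases
    case 1
    then show ?thesis using s' \<open>s \<noteq> s'\<close> by (auto simp: star_def)
  next
    case 2
    then have "adj s' s" using s \<open>s \<noteq> s'\<close> by (auto simp: star_def)
    then show ?thesis by (simp add: adj_commute)
  next
    case 3
    obtain j where j: "j \<noteq> a" "diffs x s = {a, j}" "s \<in> V" "s a = \<alpha>"
      using star_pointE[OF s 3(1) a \<alpha>] .
    obtain j' where j': "j' \<noteq> a" "diffs x s' = {a, j'}" "s' \<in> V" "s' a = \<alpha>"
      using star_pointE[OF s' 3(2) a \<alpha>] .
    show ?thesis
    proof (cases "j = j'")
      case True
      have "j \<in> {1..m}" using j(2) diffs_subset_atLeastAtMost by blast
      moreover have "s \<in> line x {a, j}" "s' \<in> line x {a, j}" using j j' True by (auto simp: line_def)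
      ultimately have "s = s'" using line_point_eqI[of s x a j s'] a j(1,4) j'(4) by simp
      then show ?thesis using \<open>s \<noteq> s'\<close> by simp
    next
      case False
      then have "diffs s s' = {j, j'}" using diffs_eq_if_common_pivot[OF j(2) j'(2)] j(1,4) j'(1,4) by simp
      then show ?thesis using False by (rule adj_if_diffs_eq)
    qed
  qed
qed

text \<open>The second alternative describes the one common neighbour outside the star through x, u, v;
  it exists only when n is even.\<close>
lemma common_neighbour_cases:
  assumes xu: "diffs x u = {a, b}" and xv: "diffs x v = {a, r}" and uv: "u a = v a"
    and abr: "a \<noteq> b" "a \<noteq> r" "b \<noteq> r"
    and w: "adj x w" "adj u w" "adj v w"
  shows "w a = u a \<or> diffs x w = {b, r}"
proof (cases "w a = u a")
  case False
  then have wa: "w a \<noteq> u a" .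
  have a: "a \<in> {1..m}" using xu diffs_subset_atLeastAtMost by blast
  obtain t where t: "t \<in> diffs x w" "t \<noteq> a"
  proof -
    obtain p q where "diffs x w = {p, q}" "p \<noteq> q" using w(1) by (auto simp: adj_iff_card_diffs card_2_iff)
    then show thesis using that[of p] that[of q] by auto
  qed
  have in_diffs: "c \<in> diffs x w"
    if y: "diffs x y = {a, c}" "y a = u a" "adj y w" "a \<noteq> c" for y c
  proof (rule ccontr)
    assume c: "c \<notin> diffs x w"
    have cm: "c \<in> {1..m}" and tm: "t \<in> {1..m}" using y(1) t(1) diffs_subset_atLeastAtMost by blast+
    have "a \<in> diffs y w" using a wa y(2) by (simp add: in_diffs_iff)
    moreover have "c \<in> diffs y w"
    proof -
      have "x c = w c" using eq_if_notin_diffs[OF cm c] .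
      moreover have "c \<in> diffs x y" using y(1) by simp
      ultimately show ?thesis by (simp add: in_diffs_iff)
    qed
    moreover have "t \<in> diffs y w"
    proof -
      have "t \<notin> diffs x y" using y(1) t c by auto
      then have "x t = y t" using eq_if_notin_diffs[OF tm] by blast
      then show ?thesis using t(1) by (simp add: in_diffs_iff)
    qed
    ultimately have "\<not> adj y w" using not_adj_if_three_diffs[of a y w c t] y(4) t c by blast
    then show False using y(3) by simp
  qed
  have "diffs x w = {b, r}"
    using diffs_eq_if_adj[OF w(1) in_diffs[OF xu refl w(2) abr(1)]
        in_diffs[OF xv uv[symmetric] w(3) abr(2)] abr(3)] .
  then show ?thesis ..
qed simp

lemma closed_clique_subset_star:
  assumes C: "closed_clique C" and xuv: "x \<in> C" "u \<in> C" "v \<in> C"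
    and xu: "diffs x u = {a, b}" and xv: "diffs x v = {a, r}" and uv: "u a = v a"
    and abr: "a \<noteq> b" "a \<noteq> r" "b \<noteq> r"
  shows "C \<subseteq> star x a (u a)"
proof
  have CV: "C \<subseteq> V" using C by (rule closed_clique_subset)
  have x: "x \<in> V" using CV xuv(1) by blast
  have abrm: "a \<in> {1..m}" "b \<in> {1..m}" "r \<in> {1..m}" using xu xv diffs_subset_atLeastAtMost by blast+
  have "a \<in> diffs x u" using xu by simp
  then have ua: "u a \<noteq> x a" by (simp add: in_diffs_iff)
  have "u \<noteq> x" "v \<noteq> x" using xu xv by (auto simp: diffs_def)
  have "u \<noteq> v" using xu xv abr by (auto simp: doubleton_eq_iff)
  fix w assume wC: "w \<in> C"
  consider "w = x" | "w = u" | "w = v" | "w \<noteq> x" "w \<noteq> u" "w \<noteq> v" by blast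
  then show "w \<in> star x a (u a)"
  proof cases
    case 2
    then show ?thesis using CV xuv(2) xu abr(1) by (auto simp: star_def intro: adj_if_diffs_eq)
  next
    case 3
    then show ?thesis using CV xuv(3) xv uv abr(2) by (auto simp: star_def intro: adj_if_diffs_eq)
  next
    case 4
    have w: "adj x w" "adj u w" "adj v w"
      using closed_clique_adj[OF C xuv(1) wC] closed_clique_adj[OF C xuv(2) wC]
        closed_clique_adj[OF C xuv(3) wC] 4 by auto
    show ?thesis
    proof (cases "w a = u a")
      case True
      then show ?thesis using w(1) CV wC by (auto simp: star_def)
    next
      case False
      text \<open>Then w is the common neighbour outside the star. A star point in a fresh direction d
        lies in C by closedness but differs from w in four coordinates.\<close>
      then have wx: "diffs x w = {b, r}" using common_neighbour_cases[OF xu xv uv abr w] by simp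
      obtain d where d: "d \<in> {1..m}" "d \<notin> {a, b, r}" using ex_fresh_index by blast
      have "u a < n" using V_lt CV xuv(2) abrm(1) by blast
      moreover have "a \<noteq> d" using d(2) by simp
      ultimately obtain s where s: "s \<in> V" "diffs x s = {a, d}" "s a = u a"
        using ex_star_point[OF x abrm(1) d(1) _ _ ua] by blast
      have "diffs s x = {a, d}" "diffs s u = {b, d}" "diffs s v = {r, d}"
        using s(2,3) diffs_eq_if_common_pivot[OF xu s(2)] diffs_eq_if_common_pivot[OF xv s(2)] uv abr d(2)
        by (simp_all add: diffs_commute)
      then have "adj s x" "adj s u" "adj s v" using abr d(2) by (simp_all add: adj_if_diffs_eq)
      then have "s \<in> C"
        using closed_cliqueD[OF C s(1) xuv] \<open>u \<noteq> x\<close> \<open>v \<noteq> x\<close> \<open>u \<noteq> v\<close> by auto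
      moreover have "diffs w s = {b, r, a, d}"
        using diffs_eq_Un_if_disjoint[of x w s] wx s(2) abr d(2) by auto
      then have "\<not> adj w s" "w \<noteq> s" using abr d(2) by (auto simp: adj_iff_card_diffs)
      ultimately show ?thesis using closed_clique_adj[OF C wC \<open>s \<in> C\<close>] by simp
    qed
  qed (use x in \<open>simp add: star_def\<close>)
qed

lemma closed_clique_cases:
  assumes C: "closed_clique C" and xC: "x \<in> C"
  shows "(\<exists>a b. a \<in> {1..m} \<and> b \<in> {1..m} \<and> a \<noteq> b \<and> C = line x {a, b}) \<or>
    (\<exists>a \<alpha>. a \<in> {1..m} \<and> \<alpha> < n \<and> \<alpha> \<noteq> x a \<and> C = star x a \<alpha>)"
proof -
  have CV: "C \<subseteq> V" using C by (rule closed_clique_subset)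
  have x: "x \<in> V" using CV xC by blast
  obtain u where u: "u \<in> C" "u \<noteq> x"
  proof -
    obtain u1 u2 u3 where "u1 \<in> C" "u2 \<in> C" "u3 \<in> C" "u1 \<noteq> u2" "u1 \<noteq> u3" "u2 \<noteq> u3"
      using C by (rule closed_clique_three)
    then show thesis using that[of u1] that[of u2] by auto
  qed
  have xu: "adj x u" using closed_clique_adj[OF C xC u(1)] u(2) by simp
  obtain p q where pq: "diffs x u = {p, q}" "p \<noteq> q" using xu by (auto simp: adj_iff_card_diffs card_2_iff)
  have pqm: "p \<in> {1..m}" "q \<in> {1..m}" using pq(1) diffs_subset_atLeastAtMost by blast+
  show ?thesis
  proof (cases "C \<subseteq> line x {p, q}")
    case True
    then have "C = line x {p, q}" using closed_clique_eq_if_subset[OF line_clique[OF pqm pq(2)] C] by simp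
    then show ?thesis using pqm pq(2) by blast
  next
    case False
    then obtain v where v: "v \<in> C" "v \<notin> line x {p, q}" by blast
    have "v \<noteq> x" "v \<noteq> u" using v u CV pq(1) line_self[OF x] by (auto simp: line_def)
    then have xv: "adj x v" and uv: "adj u v"
      using closed_clique_adj[OF C xC v(1)] closed_clique_adj[OF C u(1) v(1)] by auto
    have "\<not> (diffs x v = diffs x u \<and> diffs u v = diffs x u)" using v CV pq(1) by (auto simp: line_def)
    then obtain a b r where abr: "diffs x u = {a, b}" "diffs x v = {a, r}" "diffs u v = {b, r}"
      "a \<noteq> b" "a \<noteq> r" "b \<noteq> r"
      using adj_triangle_cases[OF xu xv uv] by blast
    have a: "a \<in> {1..m}" using abr(1) diffs_subset_atLeastAtMost by blast
    have uva: "u a = v a" using eq_if_notin_diffs[OF a, of u v] abr(3-5) by auto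
    have "a \<in> diffs x u" using abr(1) by simp
    then have \<alpha>: "u a < n" "u a \<noteq> x a" using CV u(1) a by (auto simp: mem_V_iff in_diffs_iff)
    have "C \<subseteq> star x a (u a)" using closed_clique_subset_star[OF C xC u(1) v(1) abr(1,2) uva abr(4-6)] .
    then have "C = star x a (u a)" using closed_clique_eq_if_subset[OF star_clique[OF x a \<alpha>(2)] C] by simp
    then show ?thesis using a \<alpha> by blast
  qed
qed

lemma closed_clique_meets_star:
  assumes X: "X \<in> V" and a: "a \<in> {1..m}" and \<alpha>: "\<alpha> < n" "\<alpha> \<noteq> X a"
    and C: "closed_clique C" "X \<in> C"
  shows "\<exists>s\<in>star X a \<alpha>. \<exists>c\<in>C. s \<noteq> X \<and> c \<noteq> X \<and> (s = c \<or> adj s c)"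
proof -
  have diffs_ne: "y \<noteq> X" if "diffs X y = {i, j}" for y i j
    using that by (auto simp: diffs_def)
  have on_common_line: "\<exists>s\<in>star X a \<alpha>. \<exists>c\<in>C. s \<noteq> X \<and> c \<noteq> X \<and> (s = c \<or> adj s c)"
    if "s \<in> star X a \<alpha>" "c \<in> C" "s \<noteq> X" "c \<noteq> X" "s \<in> line X {p, q}" "c \<in> line X {p, q}"
      "p \<in> {1..m}" "q \<in> {1..m}" "p \<noteq> q" for s c p q
    using eq_or_adj_if_mem_line[OF that(5-9)] that(1-4) by blast
  from closed_clique_cases[OF C] show ?thesis
  proof (elim disjE exE conjE)
    fix p q assume pq: "p \<in> {1..m}" "q \<in> {1..m}" "p \<noteq> q" and CL: "C = line X {p, q}"
    show ?thesis
    proof (cases "a \<in> {p, q}")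
      case True
      then obtain j where j: "j \<in> {1..m}" "j \<noteq> a" "{p, q} = {a, j}" using pq by auto
      obtain s where s: "s \<in> V" "s \<in> star X a \<alpha>" "diffs X s = {a, j}" "s a = \<alpha>"
        using ex_star_point[OF X a j(1) j(2)[symmetric] \<alpha>] by blast
      have "s \<in> C" using s(1,3) CL j(3) by (simp add: line_def)
      then show ?thesis using s(2) diffs_ne[OF s(3)] by blast
    next
      case False
      obtain s where s: "s \<in> V" "s \<in> star X a \<alpha>" "diffs X s = {a, p}" "s a = \<alpha>"
        using ex_star_point[OF X a pq(1) _ \<alpha>] False by auto
      have "p \<in> diffs X s" using s(3) by simp
      then have "s p < n" "s p \<noteq> X p" using s(1) pq(1) by (auto simp: in_diffs_iff mem_V_iff)
      then obtain c where c: "c \<in> V" "diffs X c = {q, p}" "c p = s p"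
        using ex_neighbour[OF X pq(2,1) pq(3)[symmetric]] by blast
      have "diffs X s = {p, a}" "diffs X c = {p, q}" using s(3) c(2) by auto
      then have "diffs s c = {a, q}" using diffs_eq_if_common_pivot[of X s p a c q] c(3) False pq(3) by simp
      then have "adj s c" using False by (simp add: adj_if_diffs_eq)
      moreover have "c \<in> C" using c(1,2) CL by (auto simp: line_def)
      ultimately show ?thesis using s(2) diffs_ne[OF s(3)] diffs_ne[OF c(2)] by blast
    qed
  next
    fix a' \<alpha>' assume a': "a' \<in> {1..m}" "\<alpha>' < n" "\<alpha>' \<noteq> X a'" and CS: "C = star X a' \<alpha>'"
    obtain j where j: "j \<in> {1..m}" "j \<noteq> a" "a' \<noteq> a \<Longrightarrow> j = a'"
    proof (cases "a' = a")
      case True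
      then show thesis using that ex_fresh_index[of a a a] by auto
    qed (use that a' in auto)
    define k where "k = (if a' = a then j else a)"
    have k: "k \<in> {1..m}" "k \<noteq> a'" "{a', k} = {a, j}"
      using j a a' by (auto simp: k_def)
    obtain s where s: "s \<in> star X a \<alpha>" "diffs X s = {a, j}"
      using ex_star_point[OF X a j(1) j(2)[symmetric] \<alpha>] by blast
    obtain c where c: "c \<in> star X a' \<alpha>'" "diffs X c = {a', k}"
      using ex_star_point[OF X a'(1) k(1) k(2)[symmetric] a'(2,3)] by blast
    have "s \<in> V" "c \<in> V" using s(1) c(1) X by (auto simp: star_def)
    then have "s \<in> line X {a, j}" "c \<in> line X {a, j}" using s(2) c(2) k(3) by (simp_all add: line_def)
    moreover have "c \<in> C" using c(1) CS by simp
    ultimately show ?thesis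
      using on_common_line[OF s(1) _ diffs_ne[OF s(2)] diffs_ne[OF c(2)] _ _ a j(1) j(2)[symmetric]] by blast
  qed
qed

lemma adj_across_disjoint_lines:
  assumes disj: "line x P \<inter> line y {q, q'} = {}" and qq: "q \<in> {1..m}" "q' \<in> {1..m}" "q \<noteq> q'"
    and z: "z \<in> line x P" and w: "w \<in> line y {q, q'}" and zw: "adj z w"
  shows "z q = w q \<or> z q' = w q'"
proof (rule ccontr)
  assume "\<not> (z q = w q \<or> z q' = w q')"
  then have "q \<in> diffs z w" "q' \<in> diffs z w" using qq by (simp_all add: in_diffs_iff)
  then have "diffs z w = {q, q'}" using diffs_eq_if_adj[OF zw] qq(3) by blast
  moreover have "diffs y w \<subseteq> {q, q'}" using w by (simp add: line_def)
  ultimately have "diffs y z \<subseteq> {q, q'}" using diffs_subset_Un[of y z w] diffs_commute[of w z] by auto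
  then have "z \<in> line y {q, q'}" using z by (simp add: line_def)
  then show False using disj z by blast
qed

text \<open>If P = {q', s} and Q = {q, q'} are different directions, an edge from line x P to a disjoint
  line y Q that changes coordinate q cannot change coordinate s: otherwise the point of line x P with
  s-coordinate y s would lie on line y Q.\<close>
lemma adj_across_disjoint_lines_agree:
  assumes x: "x \<in> V" and y: "y \<in> V" and disj: "line x {q', s} \<inter> line y {q, q'} = {}"
    and qs: "q \<in> {1..m}" "q' \<in> {1..m}" "s \<in> {1..m}" "q \<noteq> q'" "q \<noteq> s" "q' \<noteq> s"
    and z: "z \<in> line x {q', s}" and w: "w \<in> line y {q, q'}" and zw: "adj z w" "z q \<noteq> w q"
  shows "z s = y s"
proof (rule ccontr)
  assume zs: "z s \<noteq> y s"
  have "s \<notin> diffs y w" using w qs by (auto simp: line_def)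
  then have "y s = w s" using eq_if_notin_diffs[OF qs(3)] by blast
  then have "s \<in> diffs z w" "q \<in> diffs z w" using zs zw(2) qs by (simp_all add: in_diffs_iff)
  then have zw_diffs: "diffs z w = {q, s}" using diffs_eq_if_adj[OF zw(1)] qs(5) by blast
  have "y s < n" using y qs(3) by (simp add: mem_V_iff)
  then obtain z0 where z0: "z0 \<in> V" "diffs x z0 \<subseteq> {q', s}" "z0 s = y s"
    using ex_vertex_diffs_subset[OF x qs(2,3,6)] by blast
  have "diffs y z0 \<subseteq> {q, q'}"
  proof
    fix i assume i: "i \<in> diffs y z0"
    then have im: "i \<in> {1..m}" "y i \<noteq> z0 i" by (simp_all add: in_diffs_iff)
    show "i \<in> {q, q'}"
    proof (rule ccontr)
      assume iQ: "i \<notin> {q, q'}"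
      have "i \<noteq> s" using im(2) z0(3) by auto
      have "i \<notin> diffs x z0" "i \<notin> diffs x z" "i \<notin> diffs z w" "i \<notin> diffs y w"
        using z0(2) z w zw_diffs iQ \<open>i \<noteq> s\<close> by (auto simp: line_def)
      then have "y i = z0 i"
        using eq_if_notin_diffs[OF im(1), of x z0] eq_if_notin_diffs[OF im(1), of x z]
          eq_if_notin_diffs[OF im(1), of z w] eq_if_notin_diffs[OF im(1), of y w] by simp
      then show False using im(2) by simp
    qed
  qed
  then have "z0 \<in> line x {q', s} \<inter> line y {q, q'}" using z0 by (simp add: line_def)
  then show False using disj by blast
qed

lemma linked_point_pinned_if_disjoint_directions:
  assumes disj: "line x P \<inter> line y {q, q'} = {}" and qq: "q \<in> {1..m}" "q' \<in> {1..m}" "q \<noteq> q'"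
    and P: "q \<notin> P" "q' \<notin> P"
    and z: "z \<in> line x P" and w: "w \<in> line y {q, q'}" and zw: "adj z w"
  shows "w q = x q \<or> w q' = x q'"
proof -
  have "q \<notin> diffs x z" "q' \<notin> diffs x z" using z P by (auto simp: line_def)
  then have "x q = z q" "x q' = z q'" using eq_if_notin_diffs qq(1,2) by blast+
  then show ?thesis using adj_across_disjoint_lines[OF disj qq z w zw] by auto
qed

lemma linked_point_pinned_if_shared_direction:
  assumes x: "x \<in> V" and y: "y \<in> V" and disj: "line x {q', s} \<inter> line y {q, q'} = {}"
    and qs: "q \<in> {1..m}" "q' \<in> {1..m}" "s \<in> {1..m}" "q \<noteq> q'" "q \<noteq> s" "q' \<noteq> s"
    and z0: "z0 \<in> line x {q', s}" "z0 s = y s"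
    and z: "z \<in> line x {q', s}" and w: "w \<in> line y {q, q'}" and zw: "adj z w"
  shows "w q = x q \<or> w q' = z0 q'"
proof (cases "z q = w q")
  case True
  have "q \<notin> diffs x z" using z qs by (auto simp: line_def)
  then show ?thesis using True eq_if_notin_diffs[OF qs(1), of x z] by simp
next
  case False
  then have "z q' = w q'" using adj_across_disjoint_lines[OF disj qs(1,2,4) z w zw] by simp
  moreover have "z = z0"
  proof -
    have "{q', s} = {s, q'}" by blast
    then have "z \<in> line x {s, q'}" "z0 \<in> line x {s, q'}" using z z0(1) by simp_all
    moreover have "z s = z0 s" using adj_across_disjoint_lines_agree[OF x y disj qs z w zw False] z0(2) by simp
    ultimately show ?thesis using line_point_eqI qs(3,2) qs(6)[symmetric] by blast
  qed
  ultimately show ?thesis by simp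
qed

lemma direction_eq_if_linked:
  assumes x: "x \<in> V" and y: "y \<in> V"
    and P: "p1 \<in> {1..m}" "p2 \<in> {1..m}" "p1 \<noteq> p2" and Q: "q1 \<in> {1..m}" "q2 \<in> {1..m}" "q1 \<noteq> q2"
    and disj: "line x {p1, p2} \<inter> line y {q1, q2} = {}"
    and w: "w1 \<in> line y {q1, q2}" "w2 \<in> line y {q1, q2}" "w3 \<in> line y {q1, q2}"
      "w1 \<noteq> w2" "w1 \<noteq> w3" "w2 \<noteq> w3"
    and linked: "\<forall>w\<in>{w1, w2, w3}. \<exists>z\<in>line x {p1, p2}. adj z w"
  shows "{p1, p2} = {q1, q2}"
proof (rule ccontr)
  assume "{p1, p2} \<noteq> {q1, q2}"
  then obtain q q' where qq: "{q1, q2} = {q, q'}" "q \<noteq> q'" "q \<notin> {p1, p2}"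
    using P(3) Q(3) by (rule pair_neq_obtain)
  have qm: "q \<in> {1..m}" "q' \<in> {1..m}" using qq(1) Q by auto
  let ?L = "line x {p1, p2}" and ?M = "line y {q, q'}"
  have disj': "?L \<inter> ?M = {}" and wM: "w1 \<in> ?M" "w2 \<in> ?M" "w3 \<in> ?M" using disj w qq(1) by simp_all
  have "\<exists>c. \<forall>w\<in>{w1, w2, w3}. w q = x q \<or> w q' = c"
  proof (cases "q' \<in> {p1, p2}")
    case False
    have "w q = x q \<or> w q' = x q'" if ww: "w \<in> {w1, w2, w3}" for w
    proof -
      obtain z where "z \<in> ?L" "adj z w" using bspec[OF linked ww] by blast
      moreover have "w \<in> ?M" using ww wM by blast
      ultimately show ?thesis
        using linked_point_pinned_if_disjoint_directions[OF disj' qm qq(2) qq(3) False] by blast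
    qed
    then show ?thesis by blast
  next
    case True
    obtain s where s: "{p1, p2} = {q', s}" "s \<in> {1..m}" "s \<noteq> q'"
    proof (cases "q' = p1")
      case True
      then show thesis using that[of p2] P by simp
    next
      case False
      then have "q' = p2" using \<open>q' \<in> {p1, p2}\<close> by simp
      moreover have "{p1, p2} = {p2, p1}" by blast
      ultimately show thesis using that[of p1] P by simp
    qed
    have "y s < n" using V_lt y s(2) by blast
    then obtain z0 where "z0 \<in> V" "diffs x z0 \<subseteq> {q', s}" "z0 s = y s"
      using ex_vertex_diffs_subset[OF x qm(2) s(2) s(3)[symmetric]] by blast
    then have z0: "z0 \<in> line x {q', s}" "z0 s = y s" by (simp_all add: line_def)
    have "w q = x q \<or> w q' = z0 q'" if ww: "w \<in> {w1, w2, w3}" for w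
    proof -
      obtain z where "z \<in> line x {q', s}" "adj z w" using bspec[OF linked ww] s(1) by auto
      moreover have "w \<in> ?M" using ww wM by blast
      moreover have "q \<noteq> s" using s(1) qq(3) by auto
      ultimately show ?thesis
        using linked_point_pinned_if_shared_direction[OF x y _ qm s(2) qq(2) _ s(3)[symmetric] z0]
          disj' s(1) by simp
    qed
    then show ?thesis by blast
  qed
  then obtain c where "\<forall>w\<in>{w1, w2, w3}. w q = x q \<or> w q' = c" by blast
  then show False using three_line_points_not_pinned[OF qm qq(2) wM w(4-6)] by blast
qed

lemma parallel_lines_disjoint:
  assumes "diffs \<xi> \<xi>' = {a, c}" "c \<notin> {a, b}"
  shows "line \<xi> {a, b} \<inter> line \<xi>' {a, b} = {}"
proof -
  have c: "c \<in> {1..m}" "\<xi> c \<noteq> \<xi>' c" using assms(1) by (auto simp: in_diffs_iff set_eq_iff)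
  have yc: "y c = \<eta> c" if "y \<in> line \<eta> {a, b}" for \<eta> y
  proof -
    have "c \<notin> diffs \<eta> y" using that assms(2) by (auto simp: line_def)
    then show ?thesis using eq_if_notin_diffs[OF c(1), of \<eta> y] by simp
  qed
  show ?thesis
  proof (rule ccontr)
    assume "line \<xi> {a, b} \<inter> line \<xi>' {a, b} \<noteq> {}"
    then obtain y where "y \<in> line \<xi> {a, b}" "y \<in> line \<xi>' {a, b}" by blast
    then show False using yc[of y \<xi>] yc[of y \<xi>'] c(2) by simp
  qed
qed

lemma parallel_lines_linked:
  assumes \<xi>: "\<xi> \<in> V" and d: "diffs \<xi> \<xi>' = {a, c}" and abc: "a \<noteq> b" "a \<noteq> c" "b \<noteq> c" "b \<in> {1..m}"
    and v: "v \<in> line \<xi>' {a, b}"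
  shows "\<exists>z\<in>line \<xi> {a, b}. adj z v"
proof -
  have c: "c \<in> {1..m}" "\<xi> c \<noteq> \<xi>' c" using d by (auto simp: in_diffs_iff set_eq_iff)
  have vV: "v \<in> V" using v by (simp add: line_def)
  have "c \<notin> diffs \<xi>' v" using v abc by (auto simp: line_def)
  then have vc: "v c = \<xi>' c" using eq_if_notin_diffs[OF c(1), of \<xi>' v] by simp
  have "\<xi> c < n" using \<xi> c(1) by (simp add: mem_V_iff)
  then obtain z where z: "z \<in> V" "diffs v z \<subseteq> {b, c}" "z c = \<xi> c"
    using ex_vertex_diffs_subset[OF vV abc(4) c(1) abc(3)] by blast
  have "v \<noteq> z" using vc z(3) c(2) by auto
  then have "diffs v z = {b, c}" using diffs_eq_pair[OF vV z(1) abc(4) c(1) abc(3) z(2)] by simp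
  then have "adj z v" using abc(3) by (simp add: diffs_commute adj_if_diffs_eq)
  moreover have "diffs \<xi> z \<subseteq> {a, b}"
  proof
    fix i assume i: "i \<in> diffs \<xi> z"
    then have im: "i \<in> {1..m}" "\<xi> i \<noteq> z i" by (simp_all add: in_diffs_iff)
    show "i \<in> {a, b}"
    proof (rule ccontr)
      assume iab: "i \<notin> {a, b}"
      have "i \<noteq> c" using im(2) z(3) by auto
      then have "i \<notin> diffs \<xi> \<xi>'" "i \<notin> diffs \<xi>' v" "i \<notin> diffs v z" using d v z(2) iab by (auto simp: line_def)
      then have "\<xi> i = z i"
        using eq_if_notin_diffs[OF im(1), of \<xi> \<xi>'] eq_if_notin_diffs[OF im(1), of \<xi>' v]
          eq_if_notin_diffs[OF im(1), of v z] by simp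
      then show False using im(2) by simp
    qed
  qed
  ultimately show ?thesis using z(1) by (auto simp: line_def)
qed

lemma descent_off_pair:
  assumes \<xi>: "\<xi> \<in> V" and ab: "a \<in> {1..m}" "b \<in> {1..m}" "a \<noteq> b"
    and k: "(\<Sum>i\<in>{1..m} - {a, b}. \<xi> i) = Suc k"
  obtains \<xi>' c where "\<xi>' \<in> V" "c \<in> {1..m}" "c \<notin> {a, b}" "diffs \<xi> \<xi>' = {a, c}"
    "k = (\<Sum>i\<in>{1..m} - {a, b}. \<xi>' i)"
proof -
  have "\<exists>c\<in>{1..m} - {a, b}. 0 < \<xi> c"
  proof (rule ccontr)
    assume "\<not> ?thesis"
    then have "(\<Sum>i\<in>{1..m} - {a, b}. \<xi> i) = 0" by (intro sum.neutral) auto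
    then show False using k by simp
  qed
  then obtain c where c: "c \<in> {1..m} - {a, b}" "0 < \<xi> c" by blast
  have "\<xi> c - 1 < n" using V_lt[OF \<xi>] c(1) by force
  then obtain \<xi>' where \<xi>': "\<xi>' \<in> V" "diffs \<xi> \<xi>' \<subseteq> {a, c}" "\<xi>' c = \<xi> c - 1"
    using ex_vertex_diffs_subset[OF \<xi> ab(1), of c] c(1) by auto
  have "\<xi> \<noteq> \<xi>'" using \<xi>'(3) c(2) by auto
  then have d: "diffs \<xi> \<xi>' = {a, c}" using diffs_eq_pair[OF \<xi> \<xi>'(1) ab(1)] c(1) \<xi>'(2) by auto
  have "\<xi>' i = \<xi> i" if "i \<in> {1..m} - {a, b} - {c}" for i
  proof -
    have "i \<notin> diffs \<xi> \<xi>'" using that \<xi>'(2) by blast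
    then show ?thesis using eq_if_notin_diffs[of i \<xi> \<xi>'] that by simp
  qed
  then have "(\<Sum>i\<in>{1..m} - {a, b} - {c}. \<xi>' i) = (\<Sum>i\<in>{1..m} - {a, b} - {c}. \<xi> i)"
    by (intro sum.cong) auto
  moreover have "(\<Sum>i\<in>{1..m} - {a, b}. z i) = z c + (\<Sum>i\<in>{1..m} - {a, b} - {c}. z i)" for z :: "nat \<Rightarrow> nat"
    using c(1) by (simp add: sum.remove)
  ultimately have "k = (\<Sum>i\<in>{1..m} - {a, b}. \<xi>' i)" using k \<xi>'(3) c(2) by simp
  then show thesis using that \<xi>'(1) c(1) d by blast
qed

lemma origin_in_V: "(\<lambda>_. 0) \<in> V"
  using three_le_n by (simp add: mem_V_iff)

lemma line_direction_unique:
  assumes x: "x \<in> V" and ab: "a \<in> {1..m}" "b \<in> {1..m}" "a \<noteq> b"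
    and eq: "line x {a, b} = line x {c, d}"
  shows "{a, b} = {c, d}"
proof -
  define \<beta> where "\<beta> = (if x b = 0 then 1 else 0 :: nat)"
  have "\<beta> < n" "\<beta> \<noteq> x b" using three_le_n by (auto simp: \<beta>_def)
  then obtain y where y: "y \<in> V" "diffs x y = {a, b}" "y b = \<beta>"
    using ex_neighbour[OF x ab] by blast
  then have "y \<in> line x {c, d}" using eq by (auto simp: line_def)
  then have "{a, b} \<subseteq> {c, d}" using y(2) by (simp add: line_def)
  then show ?thesis using ab(3) by auto
qed

definition shift :: "(nat \<Rightarrow> nat) \<Rightarrow> nat \<Rightarrow> nat \<Rightarrow> nat \<Rightarrow> (nat \<Rightarrow> nat)" where
  "shift \<xi> a b \<alpha> = zadd n \<xi> (zsmul n \<alpha> (zadd n (unitvec a) (zneg n (unitvec b))))"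

lemma shift_apply:
  assumes \<xi>: "\<xi> \<in> V" and "a \<noteq> b"
  shows "shift \<xi> a b \<alpha> a = (\<xi> a + \<alpha>) mod n" and "shift \<xi> a b \<alpha> b = (\<xi> b + \<alpha> * (n - 1)) mod n"
    and "i \<noteq> a \<Longrightarrow> i \<noteq> b \<Longrightarrow> shift \<xi> a b \<alpha> i = \<xi> i"
proof -
  define d where "d = zadd n (unitvec a) (zneg n (unitvec b))"
  have n1: "1 < n" using three_le_n by simp
  have d: "d a = 1" "d b = n - 1" using assms(2) n1 by (simp_all add: d_def zadd_def zneg_def unitvec_def)
  have shift: "shift \<xi> a b \<alpha> i = (\<xi> i + (\<alpha> * d i) mod n) mod n" for i
    by (simp add: shift_def d_def zadd_def zsmul_def)
  show "shift \<xi> a b \<alpha> a = (\<xi> a + \<alpha>) mod n" "shift \<xi> a b \<alpha> b = (\<xi> b + \<alpha> * (n - 1)) mod n"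
    using d by (simp_all add: shift mod_add_right_eq)
  assume "i \<noteq> a" "i \<noteq> b"
  then have "d i = 0" using n1 by (simp add: d_def zadd_def zneg_def unitvec_def)
  moreover have "\<xi> i mod n = \<xi> i" using \<xi> n1 by (cases "i \<in> {1..m}") (simp_all add: V_lt V_zero)
  ultimately show "shift \<xi> a b \<alpha> i = \<xi> i" by (simp add: shift)
qed

lemma shift_mem_line:
  assumes \<xi>: "\<xi> \<in> V" and ab: "a \<in> {1..m}" "b \<in> {1..m}" "a \<noteq> b"
  shows "shift \<xi> a b \<alpha> \<in> line \<xi> {a, b}"
proof -
  let ?e = "shift \<xi> a b \<alpha>"
  note e = shift_apply[OF \<xi> ab(3)]
  have "(\<Sum>i\<in>{1..m} - {a, b}. ?e i) = (\<Sum>i\<in>{1..m} - {a, b}. \<xi> i)"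
    using e(3) by (intro sum.cong) auto
  moreover have "[?e a + ?e b = \<xi> a + \<xi> b] (mod n)"
  proof -
    have "[?e a + ?e b = \<xi> a + \<alpha> + (\<xi> b + \<alpha> * (n - 1))] (mod n)"
      unfolding e(1,2) cong_def by (simp add: mod_add_eq)
    also have "\<xi> a + \<alpha> + (\<xi> b + \<alpha> * (n - 1)) = \<xi> a + \<xi> b + \<alpha> * n"
      using three_le_n by (cases n) (simp_all add: algebra_simps)
    also have "[\<dots> = \<xi> a + \<xi> b] (mod n)" by (simp add: cong_def)
    finally show ?thesis .
  qed
  ultimately have "[(\<Sum>i\<in>{1..m}. ?e i) = (\<Sum>i\<in>{1..m}. \<xi> i)] (mod n)"
    using sum_split_pair[OF _ ab, of ?e] sum_split_pair[OF _ ab, of \<xi>] by (simp add: cong_add)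
  moreover have "?e i < n" if "i \<in> {1..m}" for i
  proof (cases "i = a \<or> i = b")
    case False
    then show ?thesis using e(3)[of i] V_lt[OF \<xi> that] by simp
  qed (use e(1,2) three_le_n in auto)
  moreover have "?e j = 0" if "j \<notin> {1..m}" for j
    using that ab e(3)[of j] V_zero[OF \<xi> that] by auto
  ultimately have "?e \<in> V" using \<xi> by (simp add: mem_V_iff cong_def)
  moreover have "diffs \<xi> ?e \<subseteq> {a, b}" using e(3) by (intro diffs_subsetI) simp
  ultimately show ?thesis by (simp add: line_def)
qed

lemma coset_eq_line:
  assumes \<xi>: "\<xi> \<in> V" and ab: "a \<in> {1..m}" "b \<in> {1..m}" "a \<noteq> b"
  shows "coset n \<xi> (S_set n a b) = line \<xi> {a, b}"
proof -
  have "coset n \<xi> (S_set n a b) = shift \<xi> a b ` {..<n}"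
    by (auto simp: coset_def S_set_def shift_def)
  moreover have "shift \<xi> a b ` {..<n} \<subseteq> line \<xi> {a, b}" using shift_mem_line[OF \<xi> ab] by blast
  moreover have "line \<xi> {a, b} \<subseteq> shift \<xi> a b ` {..<n}"
  proof
    fix y assume y: "y \<in> line \<xi> {a, b}"
    define \<alpha> where "\<alpha> = (y a + (n - \<xi> a)) mod n"
    have "y a < n" "\<xi> a < n" using y \<xi> ab(1) V_lt by (auto simp: line_def)
    then have "shift \<xi> a b \<alpha> a = y a" unfolding shift_apply(1)[OF \<xi> ab(3)] \<alpha>_def by (simp add: mod_add_right_eq)
    then have "y = shift \<xi> a b \<alpha>" using line_point_eqI[OF y shift_mem_line[OF \<xi> ab] ab] by simp
    moreover have "\<alpha> < n" using three_le_n by (simp add: \<alpha>_def)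
    ultimately show "y \<in> shift \<xi> a b ` {..<n}" by blast
  qed
  ultimately show ?thesis by (simp add: subset_antisym)
qed

lemma P_part_eq_lines:
  assumes "a \<in> {1..m}" "b \<in> {1..m}" "a \<noteq> b"
  shows "P_part m n a b = (\<lambda>\<xi>. line \<xi> {a, b}) ` V"
  using coset_eq_line[OF _ assms] by (auto simp: P_part_def)

text \<open>The vertices e_1 - e_j (with corner 1 the origin) pairwise differ exactly in {i, j}.\<close>
definition corner :: "nat \<Rightarrow> nat \<Rightarrow> nat" where
  "corner j i = (if j = 1 then 0 else if i = 1 then 1 else if i = j then n - 1 else 0)"

lemma corner_in_V:
  assumes j: "j \<in> {1..m}"
  shows "corner j \<in> V"
proof (cases "j = 1")
  case False
  have one: "1 \<in> {1..m}" using four_le_m by simp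
  have "(\<Sum>i\<in>{1..m}. corner j i) = corner j 1 + corner j j + (\<Sum>i\<in>{1..m} - {1, j}. corner j i)"
    using sum_split_pair[OF _ one j] False by simp
  also have "\<dots> = n" using False three_le_n by (simp add: corner_def)
  finally show ?thesis using False j three_le_n by (auto simp: mem_V_iff corner_def)
next
  case True
  then have "corner j = (\<lambda>_. 0)" by (simp add: corner_def fun_eq_iff)
  then show ?thesis using origin_in_V by simp
qed

lemma diffs_corner:
  assumes "i \<in> {1..m}" "j \<in> {1..m}" "i \<noteq> j"
  shows "diffs (corner i) (corner j) = {i, j}"
proof -
  have "n - 1 \<noteq> 0" "n - 1 \<noteq> 1" using three_le_n by auto
  then show ?thesis using assms by (auto simp: diffs_def corner_def)
qed

end

locale csr_automorphism = csr_graph +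
  fixes \<psi> :: "(nat \<Rightarrow> nat) \<Rightarrow> (nat \<Rightarrow> nat)"
  assumes aut: "csr_aut m n \<psi>"
begin

lemma inj_on_V: "inj_on \<psi> V"
  using aut by (simp add: csr_aut_def bij_betw_def)

lemma image_V: "\<psi> ` V = V"
  using aut by (simp add: csr_aut_def bij_betw_def)

lemma in_V_image: "x \<in> V \<Longrightarrow> \<psi> x \<in> V"
  using image_V by blast

lemma adj_image_iff: "x \<in> V \<Longrightarrow> y \<in> V \<Longrightarrow> adj (\<psi> x) (\<psi> y) \<longleftrightarrow> adj x y"
  using aut by (simp add: csr_aut_def)

lemma image_eq_iff: "x \<in> V \<Longrightarrow> y \<in> V \<Longrightarrow> \<psi> x = \<psi> y \<longleftrightarrow> x = y"
  using inj_on_V by (auto dest: inj_onD)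

lemma closed_clique_image:
  assumes C: "closed_clique C"
  shows "closed_clique (\<psi> ` C)"
proof -
  have CV: "C \<subseteq> V" using C by (rule closed_clique_subset)
  have "clique (\<psi> ` C)"
    unfolding clique_def
  proof (intro conjI ballI impI)
    show "\<psi> ` C \<subseteq> V" using CV in_V_image by blast
    fix p q assume "p \<in> \<psi> ` C" "q \<in> \<psi> ` C" "p \<noteq> q"
    then obtain p0 q0 where "p0 \<in> C" "q0 \<in> C" "p = \<psi> p0" "q = \<psi> q0" "p0 \<noteq> q0" by blast
    then show "adj p q" using closed_clique_adj[OF C] adj_image_iff CV by blast
  qed
  moreover obtain u v w where "u \<in> C" "v \<in> C" "w \<in> C" "u \<noteq> v" "u \<noteq> w" "v \<noteq> w"
    using C by (rule closed_clique_three)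
  then have "\<exists>u\<in>\<psi> ` C. \<exists>v\<in>\<psi> ` C. \<exists>w\<in>\<psi> ` C. u \<noteq> v \<and> u \<noteq> w \<and> v \<noteq> w"
    using image_eq_iff CV by blast
  moreover have "w \<in> \<psi> ` C"
    if hyp: "w \<in> V" "u \<in> \<psi> ` C" "v \<in> \<psi> ` C" "t \<in> \<psi> ` C" "u \<noteq> v" "u \<noteq> t" "v \<noteq> t"
      "adj w u" "adj w v" "adj w t" for w u v t
  proof -
    obtain w0 where w0: "w0 \<in> V" "w = \<psi> w0" using hyp(1) image_V by blast
    obtain u0 v0 t0 where uvt: "u0 \<in> C" "v0 \<in> C" "t0 \<in> C" "u = \<psi> u0" "v = \<psi> v0" "t = \<psi> t0"
      using hyp(2-4) by blast
    have "u0 \<in> V" "v0 \<in> V" "t0 \<in> V" using uvt(1-3) CV by blast+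
    then have "adj w0 u0" "adj w0 v0" "adj w0 t0"
      using hyp(8-10) w0 uvt(4-6) adj_image_iff by simp_all
    moreover have "u0 \<noteq> v0" "u0 \<noteq> t0" "v0 \<noteq> t0" using hyp(5-7) uvt by blast+
    ultimately have "w0 \<in> C" using closed_cliqueD[OF C w0(1) uvt(1-3)] by blast
    then show ?thesis using w0(2) by blast
  qed
  ultimately show ?thesis unfolding closed_clique_def by blast
qed

text \<open>A star through psi x cannot be the image of a line: the image of a second line through x in
  disjoint directions would meet the star or be adjacent to it away from psi x.\<close>
lemma image_line_is_line:
  assumes x: "x \<in> V" and ab: "a \<in> {1..m}" "b \<in> {1..m}" "a \<noteq> b"
  shows "\<exists>p q. p \<in> {1..m} \<and> q \<in> {1..m} \<and> p \<noteq> q \<and> \<psi> ` line x {a, b} = line (\<psi> x) {p, q}"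
proof -
  let ?L = "line x {a, b}"
  have C: "closed_clique (\<psi> ` ?L)" using closed_clique_image[OF line_closed_clique[OF x ab]] .
  have "\<psi> x \<in> \<psi> ` ?L" using line_self[OF x] by blast
  from closed_clique_cases[OF C this] consider (line) p q where "p \<in> {1..m}" "q \<in> {1..m}" "p \<noteq> q" "\<psi> ` ?L = line (\<psi> x) {p, q}"
    | (star) a' \<alpha> where "a' \<in> {1..m}" "\<alpha> < n" "\<alpha> \<noteq> \<psi> x a'" "\<psi> ` ?L = star (\<psi> x) a' \<alpha>"
    by blast
  then show ?thesis
  proof cases
    case star
    obtain c where c: "c \<in> {1..m}" "c \<notin> {a, b}" using ex_fresh_index[of a b b] by auto
    obtain d where d: "d \<in> {1..m}" "d \<notin> {a, b, c}" using ex_fresh_index by blast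
    let ?M = "line x {c, d}"
    have "c \<noteq> d" using d(2) by blast
    have "closed_clique (\<psi> ` ?M)" using closed_clique_image[OF line_closed_clique[OF x c(1) d(1) \<open>c \<noteq> d\<close>]] .
    moreover have "\<psi> x \<in> \<psi> ` ?M" using line_self[OF x] by blast
    ultimately obtain s t where st: "s \<in> \<psi> ` ?L" "t \<in> \<psi> ` ?M" "s \<noteq> \<psi> x" "t \<noteq> \<psi> x" "s = t \<or> adj s t"
      using closed_clique_meets_star[OF in_V_image[OF x] star(1-3)] star(4) by blast
    then obtain s0 t0 where s0: "s0 \<in> ?L" "s0 \<noteq> x" "s = \<psi> s0" and t0: "t0 \<in> ?M" "t0 \<noteq> x" "t = \<psi> t0"
      by blast
    have V: "s0 \<in> V" "t0 \<in> V" using s0(1) t0(1) by (simp_all add: line_def)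
    have "diffs x s0 = {a, b}" "diffs x t0 = {c, d}"
      using diffs_eq_if_mem_line[OF line_self[OF x] s0(1) ab s0(2)[symmetric]]
        diffs_eq_if_mem_line[OF line_self[OF x] t0(1) c(1) d(1) \<open>c \<noteq> d\<close> t0(2)[symmetric]] .
    then have "diffs s0 t0 = {a, b, c, d}" using diffs_eq_Un_if_disjoint[of x s0 t0] c(2) d(2) by auto
    then have "s0 \<noteq> t0" "\<not> adj s0 t0"
      using ab(3) c(2) d(2) by (auto simp: adj_iff_card_diffs diffs_def)
    then show ?thesis using st(5) s0(3) t0(3) V image_eq_iff adj_image_iff by blast
  qed blast
qed

lemma image_direction_eq_if_adjacent:
  assumes \<xi>: "\<xi> \<in> V" "\<xi>' \<in> V" and abc: "a \<in> {1..m}" "b \<in> {1..m}" "a \<noteq> b" "a \<noteq> c" "b \<noteq> c"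
    and d: "diffs \<xi> \<xi>' = {a, c}"
    and P: "p1 \<in> {1..m}" "p2 \<in> {1..m}" "p1 \<noteq> p2" "\<psi> ` line \<xi> {a, b} = line (\<psi> \<xi>) {p1, p2}"
    and Q: "q1 \<in> {1..m}" "q2 \<in> {1..m}" "q1 \<noteq> q2" "\<psi> ` line \<xi>' {a, b} = line (\<psi> \<xi>') {q1, q2}"
  shows "{p1, p2} = {q1, q2}"
proof -
  let ?L = "line \<xi> {a, b}" and ?M = "line \<xi>' {a, b}"
  have LV: "?L \<subseteq> V" "?M \<subseteq> V" by (auto simp: line_def)
  have "c \<notin> {a, b}" using abc by blast
  then have "?L \<inter> ?M = {}" by (rule parallel_lines_disjoint[OF d])
  then have "\<psi> ` ?L \<inter> \<psi> ` ?M = {}" using inj_on_image_Int[OF inj_on_V LV] by simp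
  then have disj: "line (\<psi> \<xi>) {p1, p2} \<inter> line (\<psi> \<xi>') {q1, q2} = {}" using P(4) Q(4) by simp
  obtain v1 v2 v3 where v: "v1 \<in> ?M" "v2 \<in> ?M" "v3 \<in> ?M" "v1 \<noteq> v2" "v1 \<noteq> v3" "v2 \<noteq> v3"
    using line_three_points[OF \<xi>(2) abc(1-3)] .
  have linked: "\<exists>z\<in>line (\<psi> \<xi>) {p1, p2}. adj z (\<psi> v)" if vM: "v \<in> ?M" for v
  proof -
    obtain z where z: "z \<in> ?L" "adj z v" using parallel_lines_linked[OF \<xi>(1) d abc(3-5) abc(2) vM] by blast
    have "z \<in> V" "v \<in> V" using z(1) vM LV by blast+
    then have "\<psi> z \<in> line (\<psi> \<xi>) {p1, p2}" "adj (\<psi> z) (\<psi> v)"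
      using P(4) adj_image_iff z by blast+
    then show ?thesis by blast
  qed
  show ?thesis
  proof (rule direction_eq_if_linked[OF in_V_image[OF \<xi>(1)] in_V_image[OF \<xi>(2)] P(1-3) Q(1-3) disj])
    show "\<psi> v1 \<in> line (\<psi> \<xi>') {q1, q2}" "\<psi> v2 \<in> line (\<psi> \<xi>') {q1, q2}" "\<psi> v3 \<in> line (\<psi> \<xi>') {q1, q2}"
      using v(1-3) Q(4) by blast+
    show "\<psi> v1 \<noteq> \<psi> v2" "\<psi> v1 \<noteq> \<psi> v3" "\<psi> v2 \<noteq> \<psi> v3"
      using v image_eq_iff LV by blast+
    show "\<forall>w\<in>{\<psi> v1, \<psi> v2, \<psi> v3}. \<exists>z\<in>line (\<psi> \<xi>) {p1, p2}. adj z w"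
      using linked v(1-3) by blast
  qed
qed

definition image_dir :: "nat \<Rightarrow> nat \<Rightarrow> nat set" where
  "image_dir i j = diffs (\<psi> (corner i)) (\<psi> (corner j))"

lemma image_line_direction_eq_origin:
  assumes ab: "a \<in> {1..m}" "b \<in> {1..m}" "a \<noteq> b"
    and P: "p1 \<in> {1..m}" "p2 \<in> {1..m}" "p1 \<noteq> p2"
      "\<psi> ` line (\<lambda>_. 0) {a, b} = line (\<psi> (\<lambda>_. 0)) {p1, p2}"
    and \<xi>: "\<xi> \<in> V"
  shows "\<psi> ` line \<xi> {a, b} = line (\<psi> \<xi>) {p1, p2}"
  using \<xi>
proof (induction "\<Sum>i\<in>{1..m} - {a, b}. \<xi> i" arbitrary: \<xi>)
  case 0
  have "\<xi> i = 0" if "i \<in> {1..m}" "i \<notin> {a, b}" for i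
    using 0(1) that by simp
  then have "diffs \<xi> (\<lambda>_. 0) \<subseteq> {a, b}" by (rule diffs_subsetI)
  then have "(\<lambda>_. 0) \<in> line \<xi> {a, b}" using origin_in_V by (simp add: line_def)
  then have "line (\<lambda>_. 0) {a, b} = line \<xi> {a, b}" by (rule line_eq_if_mem)
  then have img: "\<psi> ` line \<xi> {a, b} = line (\<psi> (\<lambda>_. 0)) {p1, p2}" using P(4) by simp
  then have "\<psi> \<xi> \<in> line (\<psi> (\<lambda>_. 0)) {p1, p2}" using line_self[OF 0(2)] by blast
  then have "line (\<psi> \<xi>) {p1, p2} = line (\<psi> (\<lambda>_. 0)) {p1, p2}" by (rule line_eq_if_mem)
  then show ?case using img by simp
next
  case (Suc k)
  obtain \<xi>' c where \<xi>': "\<xi>' \<in> V" "c \<in> {1..m}" "c \<notin> {a, b}" "diffs \<xi> \<xi>' = {a, c}"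
    "k = (\<Sum>i\<in>{1..m} - {a, b}. \<xi>' i)"
    using descent_off_pair[OF Suc(3) ab Suc(2)[symmetric]] by metis
  have IH: "\<psi> ` line \<xi>' {a, b} = line (\<psi> \<xi>') {p1, p2}" using Suc(1)[OF \<xi>'(5) \<xi>'(1)] .
  obtain q1 q2 where Q: "q1 \<in> {1..m}" "q2 \<in> {1..m}" "q1 \<noteq> q2" "\<psi> ` line \<xi> {a, b} = line (\<psi> \<xi>) {q1, q2}"
    using image_line_is_line[OF Suc(3) ab] by blast
  have "{q1, q2} = {p1, p2}"
    using image_direction_eq_if_adjacent[OF Suc(3) \<xi>'(1) ab _ _ \<xi>'(4) Q P(1-3) IH] \<xi>'(3) by auto
  then show ?case using Q(4) by simp
qed

lemma image_dir_eq_line_direction: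
  assumes ab: "a \<in> {1..m}" "b \<in> {1..m}" "a \<noteq> b"
  shows "\<exists>p q. p \<in> {1..m} \<and> q \<in> {1..m} \<and> p \<noteq> q \<and> image_dir a b = {p, q} \<and>
    (\<forall>\<xi>\<in>V. \<psi> ` line \<xi> {a, b} = line (\<psi> \<xi>) {p, q})"
proof -
  obtain p q where pq: "p \<in> {1..m}" "q \<in> {1..m}" "p \<noteq> q"
    "\<psi> ` line (\<lambda>_. 0) {a, b} = line (\<psi> (\<lambda>_. 0)) {p, q}"
    using image_line_is_line[OF origin_in_V ab] by blast
  have lines: "\<forall>\<xi>\<in>V. \<psi> ` line \<xi> {a, b} = line (\<psi> \<xi>) {p, q}"
    using image_line_direction_eq_origin[OF ab pq] by blast
  have C: "corner a \<in> V" "corner b \<in> V" using corner_in_V ab by blast+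
  have "corner b \<in> line (corner a) {a, b}" using C diffs_corner[OF ab] by (simp add: line_def)
  then have "\<psi> (corner b) \<in> line (\<psi> (corner a)) {p, q}" using lines C(1) by blast
  moreover have "corner a \<noteq> corner b" using diffs_corner[OF ab] by auto
  then have "\<psi> (corner a) \<noteq> \<psi> (corner b)" using image_eq_iff[OF C] by simp
  ultimately have "image_dir a b = {p, q}"
    using diffs_eq_pair[OF in_V_image[OF C(1)] in_V_image[OF C(2)] pq(1-3)] by (simp add: image_dir_def line_def)
  then show ?thesis using pq(1-3) lines by blast
qed

lemma image_line_image_dir:
  assumes ab: "a \<in> {1..m}" "b \<in> {1..m}" "a \<noteq> b" and \<xi>: "\<xi> \<in> V"
  shows "\<psi> ` line \<xi> {a, b} = line (\<psi> \<xi>) (image_dir a b)"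
proof -
  obtain p q where "image_dir a b = {p, q}" "\<forall>\<xi>\<in>V. \<psi> ` line \<xi> {a, b} = line (\<psi> \<xi>) {p, q}"
    using image_dir_eq_line_direction[OF ab] by blast
  then show ?thesis using \<xi> by simp
qed

lemma image_dir_pair:
  "a \<in> {1..m} \<Longrightarrow> b \<in> {1..m} \<Longrightarrow> a \<noteq> b \<Longrightarrow>
    \<exists>p q. p \<in> {1..m} \<and> q \<in> {1..m} \<and> p \<noteq> q \<and> image_dir a b = {p, q}"
  using image_dir_eq_line_direction by blast

lemma image_dir_commute: "image_dir i j = image_dir j i"
  by (simp add: image_dir_def diffs_commute)

lemma image_dir_inj:
  assumes ij: "i \<in> {1..m}" "j \<in> {1..m}" "i \<noteq> j" and kl: "k \<in> {1..m}" "l \<in> {1..m}" "k \<noteq> l"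
    and eq: "image_dir i j = image_dir k l"
  shows "{i, j} = {k, l}"
proof -
  have "\<psi> ` line (\<lambda>_. 0) {i, j} = \<psi> ` line (\<lambda>_. 0) {k, l}"
    using image_line_image_dir[OF ij origin_in_V] image_line_image_dir[OF kl origin_in_V] eq by simp
  moreover have "line (\<lambda>_. 0) {i, j} \<subseteq> V" "line (\<lambda>_. 0) {k, l} \<subseteq> V" by (auto simp: line_def)
  ultimately have "line (\<lambda>_. 0) {i, j} = line (\<lambda>_. 0) {k, l}"
    using inj_on_image_eq_iff[OF inj_on_V] by blast
  then show ?thesis using line_direction_unique[OF origin_in_V ij] by simp
qed

lemma image_dir_triangle:
  assumes ijk: "i \<in> {1..m}" "j \<in> {1..m}" "k \<in> {1..m}" "i \<noteq> j" "i \<noteq> k" "j \<noteq> k"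
  shows "\<exists>p q r. image_dir i j = {p, q} \<and> image_dir i k = {p, r} \<and> image_dir j k = {q, r} \<and>
    p \<noteq> q \<and> p \<noteq> r \<and> q \<noteq> r"
proof -
  have C: "corner i \<in> V" "corner j \<in> V" "corner k \<in> V" using corner_in_V ijk by blast+
  have "adj (corner i) (corner j)" "adj (corner i) (corner k)" "adj (corner j) (corner k)"
    using diffs_corner ijk by (simp_all add: adj_if_diffs_eq)
  then have "adj (\<psi> (corner i)) (\<psi> (corner j))" "adj (\<psi> (corner i)) (\<psi> (corner k))"
    "adj (\<psi> (corner j)) (\<psi> (corner k))"
    using adj_image_iff C by simp_all
  moreover have "image_dir i k \<noteq> image_dir i j"
  proof
    assume "image_dir i k = image_dir i j"
    then have "{i, k} = {i, j}" using image_dir_inj ijk by blast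
    then show False using ijk by (auto simp: doubleton_eq_iff)
  qed
  ultimately show ?thesis using adj_triangle_cases unfolding image_dir_def by blast
qed

lemma image_P_part:
  assumes ab: "a \<in> {1..m}" "b \<in> {1..m}" "a \<noteq> b"
  shows "(\<lambda>P. \<psi> ` P) ` P_part m n a b = (\<lambda>\<eta>. line \<eta> (image_dir a b)) ` V"
proof -
  have "(\<lambda>P. \<psi> ` P) ` P_part m n a b = (\<lambda>\<xi>. \<psi> ` line \<xi> {a, b}) ` V"
    by (simp add: P_part_eq_lines[OF ab] image_image)
  also have "\<dots> = (\<lambda>\<xi>. line (\<psi> \<xi>) (image_dir a b)) ` V"
    using image_line_image_dir[OF ab] by simp
  also have "\<dots> = (\<lambda>\<eta>. line \<eta> (image_dir a b)) ` V"
    by (simp add: image_image[symmetric, of "\<lambda>\<eta>. line \<eta> (image_dir a b)" \<psi>] image_V)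
  finally show ?thesis .
qed

end

theorem lemma5:
  fixes m n :: nat and \<psi> :: "(nat \<Rightarrow> nat) \<Rightarrow> (nat \<Rightarrow> nat)"
  assumes "n > 3" and "m > 3" and "csr_aut m n \<psi>"
  shows "\<exists>\<sigma>. bij_betw \<sigma> {1..m} {1..m} \<and>
    (\<forall>a\<in>{1..m}. \<forall>b\<in>{1..m}. a \<noteq> b \<longrightarrow>
       (\<lambda>P. \<psi> ` P) ` P_part m n a b = P_part m n (\<sigma> a) (\<sigma> b))"
proof -
  interpret csr_automorphism m n \<psi> using assms by unfold_locales auto
  have "finite {1..m}" "4 \<le> card {1..m}" using four_le_m by simp_all
  then obtain \<sigma> where \<sigma>: "bij_betw \<sigma> {1..m} {1..m}"
    and dir: "\<forall>i\<in>{1..m}. \<forall>j\<in>{1..m}. i \<noteq> j \<longrightarrow> image_dir i j = {\<sigma> i, \<sigma> j}"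
    using pair_map_induced_by_permutation[of "{1..m}" image_dir, OF _ _ image_dir_commute
        image_dir_pair image_dir_inj image_dir_triangle] by blast
  have "(\<lambda>P. \<psi> ` P) ` P_part m n a b = P_part m n (\<sigma> a) (\<sigma> b)"
    if ab: "a \<in> {1..m}" "b \<in> {1..m}" "a \<noteq> b" for a b
  proof -
    have \<sigma>_ab: "\<sigma> a \<in> {1..m}" "\<sigma> b \<in> {1..m}" "\<sigma> a \<noteq> \<sigma> b"
      using bij_betw_apply[OF \<sigma>] inj_on_contraD[OF bij_betw_imp_inj_on[OF \<sigma>] ab(3)] ab by blast+
    have "image_dir a b = {\<sigma> a, \<sigma> b}" using dir ab by blast
    then show ?thesis using image_P_part[OF ab] P_part_eq_lines[OF \<sigma>_ab] by simp
  qed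
  then show ?thesis using \<sigma> by blast
qed

end
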